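(* Let $\kappa\in\mathcal{L}$, let $\lambda_1>0$, $\lambda_2>0$ with $(\lambda_1,\lambda_2)\in\mathcal{R}_2$, and let $u\ge0$. Let $X_1,\dots,X_n$ be i.i.d. samples from $\kappa$ with empirical distribution $\hat\kappa(n)$, and \[ L(\boldsymbol\lambda,m(\kappa),\hat\kappa(n))=\frac1n\sum_{i=1}^n\log\Big(1-(X_i-m(\kappa))\lambda_1-(B-f(|X_i|))\lambda_2\Big). \] Then $\mathbb{P}\big(L(\boldsymbol\lambda,m(\kappa),\hat\kappa(n))\ge u\big)\le e^{-nu}$.
   Context: $\mathcal{P}(\mathbb{R})$: probability distributions on $\mathbb{R}$ with finite mean; $m(\kappa)$: mean. Fix a strictly increasing, continuous, non-negative, convex $f:[0,\infty)\to[0,\infty)$ with $f(y)/y\to\infty$, and $B>0$; $\mathcal{L}=\{\eta\in\mathcal{P}(\mathbb{R}):\mathbb{E}_\eta f(|X|)\le B\}$. $\mathcal{R}_2=\{(\lambda_1,\lambda_2):\lambda_1\ge0,\lambda_2\ge0,\ 1-(y-m(\kappa))\lambda_1-(B-f(|y|))\lambda_2\ge0\ \forall y\in\mathbb{R}\}$ (with $\log 0=-\infty$). *)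

theory Defs
  imports "HOL-Probability.Probability"
begin

definition PR :: "real measure set" where
  "PR = {\<eta>. prob_space \<eta> \<and> sets \<eta> = sets borel \<and> integrable \<eta> (\<lambda>x. x)}"

definition mean :: "real measure \<Rightarrow> real" where
  "mean \<kappa> = (\<integral>x. x \<partial>\<kappa>)"

definition calL :: "(real \<Rightarrow> real) \<Rightarrow> real \<Rightarrow> real measure set" where
  "calL f B = {\<eta> \<in> PR. (\<integral>\<^sup>+x. ennreal (f \<bar>x\<bar>) \<partial>\<eta>) \<le> ennreal B}"

definition calR2 :: "(real \<Rightarrow> real) \<Rightarrow> real \<Rightarrow> real measure \<Rightarrow> (real \<times> real) set" where
  "calR2 f B \<kappa> = {(l1, l2). l1 \<ge> 0 \<and> l2 \<ge> 0 \<and>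
      (\<forall>y::real. 1 - (y - mean \<kappa>) * l1 - (B - f \<bar>y\<bar>) * l2 \<ge> 0)}"

definition elog :: "real \<Rightarrow> ereal" where
  "elog x = (if x > 0 then ereal (ln x) else -\<infinity>)"

definition Lemp :: "(real \<Rightarrow> real) \<Rightarrow> real \<Rightarrow> real \<times> real \<Rightarrow> real \<Rightarrow> nat \<Rightarrow> (nat \<Rightarrow> real) \<Rightarrow> ereal" where
  "Lemp f B lam m n xs =
     ereal (1 / real n) * (\<Sum>i<n. elog (1 - (xs i - m) * fst lam - (B - f \<bar>xs i\<bar>) * snd lam))"

end

theory Submission
  imports Defs
begin

text \<open>Let g(y) = 1 - (y - m) l1 - (B - f |y|) l2 (this is dual_factor). Membership in R_2 makes g
  nonnegative, and for X distributed as kappa in L we get E g(X) = 1 - l2 (B - E f |X|) <= 1. By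
  independence E (prod_i g(X_i)) <= 1, while L >= u says prod_i g(X_i) >= exp(n u), so Markov's
  inequality gives the bound.\<close>

definition dual_factor :: "(real \<Rightarrow> real) \<Rightarrow> real \<Rightarrow> real \<times> real \<Rightarrow> real \<Rightarrow> real \<Rightarrow> real" where
  "dual_factor f B lam m y = 1 - (y - m) * fst lam - (B - f \<bar>y\<bar>) * snd lam"

lemma Lemp_eq_dual_factor:
  "Lemp f B lam m n xs = ereal (1 / real n) * (\<Sum>i<n. elog (dual_factor f B lam m (xs i)))"
  by (simp add: Lemp_def dual_factor_def)

lemma dual_factor_nonneg:
  assumes "(l1, l2) \<in> calR2 f B \<kappa>"
  shows "dual_factor f B (l1, l2) (mean \<kappa>) y \<ge> 0"
  using assms by (simp add: calR2_def dual_factor_def)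

lemma continuous_on_comp_abs:
  fixes f :: "real \<Rightarrow> real"
  assumes "continuous_on {0..} f"
  shows "continuous_on UNIV (\<lambda>x. f \<bar>x\<bar>)"
  by (rule continuous_on_compose2[OF assms]) (auto intro!: continuous_intros)

lemma borel_measurable_dual_factor:
  fixes f :: "real \<Rightarrow> real"
  assumes "continuous_on {0..} f"
  shows "dual_factor f B lam m \<in> borel_measurable borel"
  unfolding dual_factor_def
  by (intro borel_measurable_continuous_onI continuous_intros continuous_on_comp_abs[OF assms])

lemma
  fixes f :: "real \<Rightarrow> real"
  assumes "\<kappa> \<in> calL f B" and "continuous_on {0..} f" and "\<forall>y\<ge>0. f y \<ge> 0" and "B \<ge> 0"
  shows integrable_calL: "integrable \<kappa> (\<lambda>x. f \<bar>x\<bar>)"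
    and integral_calL_le: "(\<integral>x. f \<bar>x\<bar> \<partial>\<kappa>) \<le> B"
proof -
  have sets: "sets \<kappa> = sets borel"
    and nn_le: "(\<integral>\<^sup>+x. ennreal (f \<bar>x\<bar>) \<partial>\<kappa>) \<le> ennreal B"
    using assms(1) by (auto simp: calL_def PR_def)
  have meas: "(\<lambda>x. f \<bar>x\<bar>) \<in> borel_measurable \<kappa>"
    unfolding measurable_cong_sets[OF sets refl]
    by (rule borel_measurable_continuous_onI[OF continuous_on_comp_abs[OF assms(2)]])
  show int: "integrable \<kappa> (\<lambda>x. f \<bar>x\<bar>)"
    using assms(3) le_less_trans[OF nn_le ennreal_less_top]
    by (intro integrableI_nonneg[OF meas]) auto
  have "ennreal (\<integral>x. f \<bar>x\<bar> \<partial>\<kappa>) = (\<integral>\<^sup>+x. ennreal (f \<bar>x\<bar>) \<partial>\<kappa>)"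
    using assms(3) by (intro nn_integral_eq_integral[symmetric] int) auto
  with nn_le have "ennreal (\<integral>x. f \<bar>x\<bar> \<partial>\<kappa>) \<le> ennreal B" by simp
  with assms(4) show "(\<integral>x. f \<bar>x\<bar> \<partial>\<kappa>) \<le> B"
    by (simp add: ennreal_le_iff)
qed

lemma
  assumes "\<kappa> \<in> PR" and f_int: "integrable \<kappa> (\<lambda>x. f \<bar>x\<bar>)"
  shows integrable_dual_factor: "integrable \<kappa> (dual_factor f B lam (mean \<kappa>))"
    and integral_dual_factor:
      "(\<integral>y. dual_factor f B lam (mean \<kappa>) y \<partial>\<kappa>) = 1 - snd lam * (B - (\<integral>x. f \<bar>x\<bar> \<partial>\<kappa>))"
proof -
  interpret prob_space \<kappa> using assms(1) by (simp add: PR_def)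
  have id_int: "integrable \<kappa> (\<lambda>x. x)" using assms(1) by (simp add: PR_def)
  have df: "dual_factor f B lam (mean \<kappa>) =
      (\<lambda>y. (1 + mean \<kappa> * fst lam - B * snd lam) - fst lam * y + snd lam * f \<bar>y\<bar>)"
    by (auto simp: dual_factor_def algebra_simps)
  show "integrable \<kappa> (dual_factor f B lam (mean \<kappa>))"
    unfolding df using id_int f_int by auto
  show "(\<integral>y. dual_factor f B lam (mean \<kappa>) y \<partial>\<kappa>) = 1 - snd lam * (B - (\<integral>x. f \<bar>x\<bar> \<partial>\<kappa>))"
    unfolding df using id_int f_int by (simp add: mean_def prob_space algebra_simps)
qed

lemma nn_integral_dual_factor_le_1:
  fixes f :: "real \<Rightarrow> real"
  assumes \<kappa>: "\<kappa> \<in> calL f B" and lam: "(l1, l2) \<in> calR2 f B \<kappa>"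
    and f_cont: "continuous_on {0..} f" and f_nonneg: "\<forall>y\<ge>0. f y \<ge> 0" and "B \<ge> 0"
  shows "(\<integral>\<^sup>+y. ennreal (dual_factor f B (l1, l2) (mean \<kappa>) y) \<partial>\<kappa>) \<le> 1"
proof -
  have PR: "\<kappa> \<in> PR" using \<kappa> by (simp add: calL_def)
  note f_int = integrable_calL[OF assms(1,3-5)]
  have "l2 \<ge> 0" using lam by (simp add: calR2_def)
  then have "(\<integral>y. dual_factor f B (l1, l2) (mean \<kappa>) y \<partial>\<kappa>) \<le> 1"
    using integral_dual_factor[OF PR f_int] integral_calL_le[OF assms(1,3-5)] by simp
  then show ?thesis
    using dual_factor_nonneg[OF lam]
    by (subst nn_integral_eq_integral) (auto intro: integrable_dual_factor[OF PR f_int])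
qed

lemma sum_elog:
  fixes z :: "nat \<Rightarrow> real"
  shows "(\<Sum>i<n. elog (z i)) = (if \<forall>i<n. z i > 0 then ereal (\<Sum>i<n. ln (z i)) else -\<infinity>)"
  by (induction n) (auto simp: elog_def less_Suc_eq)

lemma exp_le_prod_if_mean_elog_ge:
  fixes z :: "nat \<Rightarrow> real"
  assumes "ereal u \<le> ereal (1 / real n) * (\<Sum>i<n. elog (z i))"
  shows "exp (real n * u) \<le> (\<Prod>i<n. z i)"
proof (cases "n = 0")
  case False
  then have pos: "\<forall>i<n. z i > 0" and "u \<le> (\<Sum>i<n. ln (z i)) / real n"
    using assms by (auto simp: sum_elog split: if_splits)
  then have "real n * u \<le> (\<Sum>i<n. ln (z i))"
    using False by (simp add: field_simps)
  then have "exp (real n * u) \<le> exp (\<Sum>i<n. ln (z i))" by simp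
  also have "\<dots> = (\<Prod>i<n. z i)" using pos by (simp add: exp_sum)
  finally show ?thesis .
qed simp

lemma ennreal_prod_ge_if_mean_elog_ge:
  fixes z :: "nat \<Rightarrow> real"
  assumes "ereal u \<le> ereal (1 / real n) * (\<Sum>i<n. elog (z i))" and "\<And>i. z i \<ge> 0"
  shows "1 \<le> ennreal (exp (- real n * u)) * (\<Prod>i<n. ennreal (z i))"
proof -
  have "1 \<le> exp (- real n * u) * (\<Prod>i<n. z i)"
    using exp_le_prod_if_mean_elog_ge[OF assms(1)] by (simp add: exp_minus field_simps)
  then show ?thesis
    using assms(2) by (simp add: prod_ennreal prod_nonneg flip: ennreal_mult ennreal_1 ennreal_le_iff)
qed

lemma (in prob_space) indep_vars_prod_Markov_inequality:
  fixes Y :: "'i \<Rightarrow> 'a \<Rightarrow> ennreal"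
  assumes "finite I" and indep: "indep_vars (\<lambda>_. borel) Y I"
  shows "emeasure M {\<omega> \<in> space M. 1 \<le> c * (\<Prod>i\<in>I. Y i \<omega>)} \<le> c * (\<Prod>i\<in>I. \<integral>\<^sup>+\<omega>. Y i \<omega> \<partial>M)"
proof -
  have "(\<lambda>\<omega>. \<Prod>i\<in>I. Y i \<omega>) \<in> borel_measurable M"
    using indep by (intro borel_measurable_prod_ennreal) (auto simp: indep_vars_def)
  then have "emeasure M {\<omega> \<in> space M. 1 \<le> c * (\<Prod>i\<in>I. Y i \<omega>)}
      \<le> c * (\<integral>\<^sup>+\<omega>. (\<Prod>i\<in>I. Y i \<omega>) * indicator (space M) \<omega> \<partial>M)"
    by (intro nn_integral_Markov_inequality) auto
  also have "(\<integral>\<^sup>+\<omega>. (\<Prod>i\<in>I. Y i \<omega>) * indicator (space M) \<omega> \<partial>M) = (\<integral>\<^sup>+\<omega>. (\<Prod>i\<in>I. Y i \<omega>) \<partial>M)"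
    by (intro nn_integral_cong) auto
  also have "\<dots> = (\<Prod>i\<in>I. \<integral>\<^sup>+\<omega>. Y i \<omega> \<partial>M)"
    by (intro indep_vars_nn_integral assms) auto
  finally show ?thesis .
qed

theorem lemma27:
  fixes f :: "real \<Rightarrow> real" and B :: real and \<kappa> :: "real measure"
    and l1 l2 u :: real and n :: nat
    and M :: "'a measure" and X :: "nat \<Rightarrow> 'a \<Rightarrow> real"
  assumes f_mono: "strict_mono_on {0..} f"
    and f_cont: "continuous_on {0..} f"
    and f_nonneg: "\<forall>y\<ge>0. f y \<ge> 0"
    and f_convex: "convex_on {0..} f"
    and f_superlin: "filterlim (\<lambda>y. f y / y) at_top at_top"
    and B_pos: "B > 0"
    and kappa: "\<kappa> \<in> calL f B"
    and l1_pos: "l1 > 0" and l2_pos: "l2 > 0"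
    and lam_R2: "(l1, l2) \<in> calR2 f B \<kappa>"
    and u_nonneg: "u \<ge> 0"
    and M: "prob_space M"
    and X_meas: "\<And>i. i < n \<Longrightarrow> X i \<in> borel_measurable M"
    and X_indep: "prob_space.indep_vars M (\<lambda>_. borel) X {..<n}"
    and X_distr: "\<And>i. i < n \<Longrightarrow> distr M borel (X i) = \<kappa>"
  shows "measure M {\<omega> \<in> space M. Lemp f B (l1, l2) (mean \<kappa>) n (\<lambda>i. X i \<omega>) \<ge> ereal u}
           \<le> exp (- real n * u)"
proof -
  interpret prob_space M by (rule M)
  define g where "g = dual_factor f B (l1, l2) (mean \<kappa>)"
  define c where "c = ennreal (exp (- real n * u))"
  have g_meas: "g \<in> borel_measurable borel"
    unfolding g_def by (rule borel_measurable_dual_factor[OF f_cont])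
  have g_nonneg: "g y \<ge> 0" for y
    unfolding g_def by (rule dual_factor_nonneg[OF lam_R2])
  have E_le_1: "(\<integral>\<^sup>+\<omega>. ennreal (g (X i \<omega>)) \<partial>M) \<le> 1" if "i < n" for i
  proof -
    have "(\<integral>\<^sup>+\<omega>. ennreal (g (X i \<omega>)) \<partial>M) = (\<integral>\<^sup>+y. ennreal (g y) \<partial>distr M borel (X i))"
      using X_meas[OF that] g_meas by (simp add: nn_integral_distr)
    also have "\<dots> \<le> 1"
      using nn_integral_dual_factor_le_1[OF kappa lam_R2 f_cont f_nonneg] B_pos
      by (simp add: X_distr[OF that] g_def)
    finally show ?thesis .
  qed
  have indep: "indep_vars (\<lambda>_. borel) (\<lambda>i \<omega>. ennreal (g (X i \<omega>))) {..<n}"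
    using g_meas by (intro indep_vars_compose2[OF X_indep]) auto
  have "{\<omega> \<in> space M. Lemp f B (l1, l2) (mean \<kappa>) n (\<lambda>i. X i \<omega>) \<ge> ereal u}
      \<subseteq> {\<omega> \<in> space M. 1 \<le> c * (\<Prod>i<n. ennreal (g (X i \<omega>)))}"
    using ennreal_prod_ge_if_mean_elog_ge[OF _ g_nonneg]
    by (auto simp: Lemp_eq_dual_factor g_def c_def)
  moreover have "(\<lambda>\<omega>. \<Prod>i<n. ennreal (g (X i \<omega>))) \<in> borel_measurable M"
    using X_meas g_meas by (intro borel_measurable_prod_ennreal) auto
  ultimately have "emeasure M {\<omega> \<in> space M. Lemp f B (l1, l2) (mean \<kappa>) n (\<lambda>i. X i \<omega>) \<ge> ereal u}
      \<le> c * (\<Prod>i<n. \<integral>\<^sup>+\<omega>. ennreal (g (X i \<omega>)) \<partial>M)"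
    by (intro order.trans[OF emeasure_mono indep_vars_prod_Markov_inequality[OF _ indep]])
      (simp_all add: pred_def)
  also have "\<dots> \<le> c"
    using prod_mono_ennreal[of "{..<n}", OF E_le_1] by (simp add: mult_left_le)
  finally show ?thesis by (simp add: emeasure_eq_measure c_def ennreal_le_iff)
qed

end
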